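(* $$4^{-4}\sum_{n=0}^\infty\frac{(-1)^n}{n!}3^n\left[\gamma_n\!\left(\tfrac14\right)-\gamma_n\!\left(\tfrac34\right)\right]=\frac1{768}\psi'''\!\left(\tfrac14\right)-\frac{\pi^4}{96}.$$
   Context: The Stieltjes constants $\gamma_n(a)$ are defined by the Laurent expansion of the Hurwitz zeta function at $s=1$: $\zeta(s,a)=\frac{1}{s-1}+\sum_{n\ge0}\frac{(-1)^n}{n!}\gamma_n(a)(s-1)^n$. $\psi=\Gamma'/\Gamma$ is the digamma function and $\psi'''$ its third derivative. *)

theory Defs
  imports "HOL-Complex_Analysis.Complex_Analysis"
begin

definition hurwitz_zeta_series :: "complex \<Rightarrow> real \<Rightarrow> complex" where
  "hurwitz_zeta_series s a = (\<Sum>k. inverse ((of_real (real k + a)) powr s))"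

text \<open>The regular part of zeta(s,a) at s = 1: the (unique, by the identity theorem)
  entire function agreeing with zeta(s,a) - 1/(s-1) on Re s > 1.\<close>
definition hurwitz_zeta_regular :: "real \<Rightarrow> complex \<Rightarrow> complex" where
  "hurwitz_zeta_regular a = (THE g. g holomorphic_on UNIV \<and>
      (\<forall>s. 1 < Re s \<longrightarrow> g s = hurwitz_zeta_series s a - 1 / (s - 1)))"

text \<open>Stieltjes constants: zeta(s,a) = 1/(s-1) + sum_n (-1)^n/n! gamma_n(a) (s-1)^n,
  i.e. gamma_n(a) = (-1)^n times the n-th derivative at 1 of the regular part.\<close>
definition stieltjes :: "nat \<Rightarrow> real \<Rightarrow> complex" where
  "stieltjes n a = (-1) ^ n * (deriv ^^ n) (hurwitz_zeta_regular a) 1"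

end

theory Submission
  imports Defs
begin

text \<open>
  The regular part g(s) = zeta(s,a) - 1/(s-1) is entire, so its Taylor series at 1 converges
  at s = 4, where it reads sum_n (-1)^n/n! 3^n gamma_n(a) = zeta(4,a) - 1/3 = psi'''(a)/6 - 1/3.
  Subtracting the cases a = 1/4 and a = 3/4 cancels the 1/3, and differentiating the reflection
  formula psi(z) - psi(1-z) = -pi cot(pi z) three times gives psi'''(1/4) + psi'''(3/4) = 16 pi^4.

  The substantial part is that g is entire, which is what makes the Stieltjes constants
  well-defined. It rests on the binomial identity zeta(s, c-1) = sum_n (s)_n/n! zeta(s+n, c):
  solved for (s-1) zeta(s,c), its right-hand side only involves values further to the right,
  so it continues (s-1) zeta(s,c) strip by strip to the whole plane.
\<close>

section \<open>The Hurwitz zeta series\<close>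

lemma summable_shifted_powr:
  assumes "c > 0" "\<sigma> > 1"
  shows "summable (\<lambda>k. (real k + c) powr (-\<sigma>))"
proof (rule summable_comparison_test_ev[of _ "\<lambda>k. real k powr (-\<sigma>)"])
  show "eventually (\<lambda>k. norm ((real k + c) powr (-\<sigma>)) \<le> real k powr (-\<sigma>)) sequentially"
    using eventually_gt_at_top[of "0::nat"]
    by eventually_elim (use assms in \<open>auto intro!: powr_mono2'\<close>)
  show "summable (\<lambda>k. real k powr (-\<sigma>))"
    using assms by (simp add: summable_real_powr_iff)
qed

lemma norm_inverse_of_real_powr:
  assumes "x > 0"
  shows "norm (inverse (complex_of_real x powr w)) = x powr (- Re w)"
  using assms by (simp add: norm_inverse norm_powr_real_powr powr_minus)

lemma norm_hurwitz_term:
  assumes "c > 0"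
  shows "norm (inverse (complex_of_real (real k + c) powr w)) = (real k + c) powr (- Re w)"
  using assms by (intro norm_inverse_of_real_powr) (simp add: add_nonneg_pos)

lemma summable_norm_hurwitz_terms:
  assumes "c > 0" "Re w > 1"
  shows "summable (\<lambda>k. norm (inverse (complex_of_real (real k + c) powr w)))"
  unfolding norm_hurwitz_term[OF assms(1)] using summable_shifted_powr[OF assms] .

lemma hurwitz_zeta_series_sums:
  assumes "c > 0" "Re w > 1"
  shows "(\<lambda>k. inverse (complex_of_real (real k + c) powr w)) sums hurwitz_zeta_series w c"
  unfolding hurwitz_zeta_series_def
  using summable_norm_cancel[OF summable_norm_hurwitz_terms[OF assms]] by (rule summable_sums)

lemma hurwitz_zeta_series_shift:
  assumes "c > 0" "Re w > 1"
  shows "hurwitz_zeta_series w c = inverse (complex_of_real c powr w) + hurwitz_zeta_series w (c + 1)"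
proof -
  have "(\<lambda>k. inverse (complex_of_real (real (Suc k) + c) powr w)) sums
          (hurwitz_zeta_series w c - inverse (complex_of_real c powr w))"
    using hurwitz_zeta_series_sums[OF assms] by (subst sums_Suc_iff) simp
  moreover have "(\<lambda>k. inverse (complex_of_real (real (Suc k) + c) powr w)) sums hurwitz_zeta_series w (c + 1)"
    using hurwitz_zeta_series_sums[of "c + 1" w] assms by (simp add: algebra_simps)
  ultimately have "hurwitz_zeta_series w c - inverse (complex_of_real c powr w) = hurwitz_zeta_series w (c + 1)"
    by (rule sums_unique2)
  then show ?thesis by (metis diff_add_cancel add.commute)
qed

lemma holomorphic_on_localI:
  assumes "\<And>z. z \<in> S \<Longrightarrow> \<exists>r>0. f holomorphic_on ball z r"
  shows "f holomorphic_on S"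
  by (rule analytic_imp_holomorphic) (use assms in \<open>auto simp: analytic_on_def\<close>)

lemma holomorphic_on_ball_suminf:
  fixes f :: "nat \<Rightarrow> complex \<Rightarrow> complex"
  assumes "\<And>n. f n holomorphic_on cball z r"
    and "eventually (\<lambda>n. \<forall>w\<in>cball z r. norm (f n w) \<le> M n) sequentially" and "summable M"
  shows "(\<lambda>w. \<Sum>n. f n w) holomorphic_on ball z r"
proof -
  have lim: "uniform_limit (cball z r) (\<lambda>n w. \<Sum>i<n. f i w) (\<lambda>w. \<Sum>i. f i w) sequentially"
    by (rule Weierstrass_m_test_ev[OF assms(2,3)])
  have "eventually (\<lambda>n. continuous_on (cball z r) (\<lambda>w. \<Sum>i<n. f i w) \<and>
          (\<lambda>w. \<Sum>i<n. f i w) holomorphic_on ball z r) sequentially"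
    by (intro always_eventually allI conjI holomorphic_on_imp_continuous_on
          holomorphic_on_subset[OF _ ball_subset_cball] holomorphic_on_sum assms(1))
  from holomorphic_uniform_limit[OF this lim] show ?thesis by auto
qed

lemma holomorphic_on_inverse_of_real_powr:
  assumes "x > 0"
  shows "(\<lambda>w. inverse (complex_of_real x powr w)) holomorphic_on S"
  using assms by (intro holomorphic_intros) (auto simp: powr_def)

lemma holomorphic_hurwitz_zeta_series:
  assumes "c > 0"
  shows "(\<lambda>w. hurwitz_zeta_series w c) holomorphic_on {w. 1 < Re w}"
proof (rule holomorphic_on_localI)
  fix z assume z: "z \<in> {w. 1 < Re w}"
  define r where "r = (Re z - 1) / 2"
  have r: "r > 0" using z by (simp add: r_def)
  have "(\<lambda>w. \<Sum>k. inverse (complex_of_real (real k + c) powr w)) holomorphic_on ball z r"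
  proof (rule holomorphic_on_ball_suminf[where M = "\<lambda>k. (real k + c) powr (-(1 + r))"])
    show "(\<lambda>w. inverse (complex_of_real (real k + c) powr w)) holomorphic_on cball z r" for k
      using assms by (intro holomorphic_on_inverse_of_real_powr) (simp add: add_nonneg_pos)
    show "eventually (\<lambda>k. \<forall>w\<in>cball z r. norm (inverse (complex_of_real (real k + c) powr w))
             \<le> (real k + c) powr (-(1 + r))) sequentially"
      using eventually_gt_at_top[of "0::nat"]
    proof eventually_elim
      case (elim k)
      show ?case
      proof
        fix w assume "w \<in> cball z r"
        then have "Re z - Re w \<le> r"
          using abs_Re_le_cmod[of "z - w"] by (auto simp: dist_norm)
        then have "1 + r \<le> Re w" by (simp add: r_def field_simps)
        moreover have "1 \<le> real k + c" using elim assms by simp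
        ultimately show "norm (inverse (complex_of_real (real k + c) powr w)) \<le> (real k + c) powr (-(1 + r))"
          unfolding norm_hurwitz_term[OF assms] by (intro powr_mono) auto
      qed
    qed
    show "summable (\<lambda>k. (real k + c) powr (-(1 + r)))"
      using summable_shifted_powr[of c "1 + r"] assms r by simp
  qed
  then show "\<exists>r>0. (\<lambda>w. hurwitz_zeta_series w c) holomorphic_on ball z r"
    using r unfolding hurwitz_zeta_series_def by blast
qed

lemma norm_hurwitz_zeta_series_le:
  assumes c: "c > 0" and v: "Re v \<ge> 2"
  shows "norm (hurwitz_zeta_series v c) \<le> (\<Sum>k. (real k + c) powr (-2)) * c powr (2 - Re v)"
proof -
  have norm_sum: "summable (\<lambda>k. norm (inverse (complex_of_real (real k + c) powr v)))"
    using summable_norm_hurwitz_terms[OF c] v by simp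
  have summ2: "summable (\<lambda>k. (real k + c) powr (-2))"
    using summable_shifted_powr[of c 2] c by simp
  have "norm (hurwitz_zeta_series v c) \<le> (\<Sum>k. norm (inverse (complex_of_real (real k + c) powr v)))"
    unfolding hurwitz_zeta_series_def by (rule summable_norm[OF norm_sum])
  also have "\<dots> \<le> (\<Sum>k. (real k + c) powr (-2) * c powr (2 - Re v))"
  proof (rule suminf_le[OF _ norm_sum summable_mult2[OF summ2]])
    fix k
    have "norm (inverse (complex_of_real (real k + c) powr v)) = (real k + c) powr (- Re v)"
      by (rule norm_hurwitz_term[OF c])
    also have "\<dots> = (real k + c) powr (-2) * (real k + c) powr (2 - Re v)"
      by (simp flip: powr_add)
    also have "\<dots> \<le> (real k + c) powr (-2) * c powr (2 - Re v)"
      using c v by (intro mult_left_mono powr_mono2') auto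
    finally show "norm (inverse (complex_of_real (real k + c) powr v))
                    \<le> (real k + c) powr (-2) * c powr (2 - Re v)" .
  qed
  also have "\<dots> = (\<Sum>k. (real k + c) powr (-2)) * c powr (2 - Re v)"
    using summ2 by (rule suminf_mult2[symmetric])
  finally show ?thesis .
qed

section \<open>The binomial expansion in the shift parameter\<close>

lemma gbinomial_uminus_mult_neg_one_power:
  "((- a) gchoose n) * (-1) ^ n = pochhammer (a :: 'a :: field_char_0) n / fact n"
  by (simp add: gbinomial_pochhammer flip: power_mult_distrib)

lemma pochhammer_series_sums:
  fixes a q :: real
  assumes "\<bar>q\<bar> < 1"
  shows "(\<lambda>n. pochhammer a n / fact n * q ^ n) sums (1 - q) powr (- a)"
proof -
  have "((- a) gchoose n) * (- q) ^ n = ((- a) gchoose n) * (-1) ^ n * q ^ n" for n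
    by (simp only: power_minus[of q] mult.assoc)
  also have "((- a) gchoose n) * (-1) ^ n = pochhammer a n / fact n" for n
    by (rule gbinomial_uminus_mult_neg_one_power)
  finally have eq: "((- a) gchoose n) * (- q) ^ n = pochhammer a n / fact n * q ^ n" for n .
  have "(\<lambda>n. ((- a) gchoose n) * (- q) ^ n) sums (1 - q) powr (- a)"
    using gen_binomial_real[of "- q" "- a"] assms by simp
  then show ?thesis unfolding eq .
qed

lemma binomial_series_inverse_powr:
  fixes s :: complex and x :: real
  assumes "x > 1"
  shows "(\<lambda>n. pochhammer s n / fact n * inverse (complex_of_real x powr (s + of_nat n)))
           sums inverse (complex_of_real (x - 1) powr s)"
proof -
  have "((- s) gchoose n) * complex_of_real x powr (- s - of_nat n) * complex_of_real (- 1) ^ n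
          = ((- s) gchoose n) * (- 1) ^ n * inverse (complex_of_real x powr (s + of_nat n))" for n
    using powr_minus[of "complex_of_real x" "s + of_nat n"] by (simp add: algebra_simps)
  also have "((- s) gchoose n) * (- 1) ^ n = pochhammer s n / fact n" for n
    by (rule gbinomial_uminus_mult_neg_one_power)
  finally have eq: "((- s) gchoose n) * complex_of_real x powr (- s - of_nat n) * complex_of_real (- 1) ^ n
          = pochhammer s n / fact n * inverse (complex_of_real x powr (s + of_nat n))" for n .
  have "complex_of_real (x + - 1) powr (- s) = inverse (complex_of_real (x - 1) powr s)"
    by (simp add: powr_minus)
  with gen_binomial_complex''[of "-1" x "- s"] assms show ?thesis
    unfolding eq by simp
qed

lemma norm_pochhammer_le:
  fixes z :: "'a :: real_normed_field"
  shows "norm (pochhammer z n) \<le> pochhammer (norm z) n"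
proof (induction n)
  case (Suc n)
  have "norm (pochhammer z (Suc n)) = norm (pochhammer z n) * norm (z + of_nat n)"
    by (simp add: pochhammer_Suc norm_mult)
  also have "\<dots> \<le> pochhammer (norm z) n * (norm z + real n)"
    using Suc.IH norm_triangle_ineq[of z "of_nat n"]
    by (intro mult_mono) (auto simp: pochhammer_prod prod_nonneg)
  finally show ?case by (simp add: pochhammer_Suc)
qed simp

lemma sums_swap_of_product_bound:
  fixes T :: "nat \<Rightarrow> nat \<Rightarrow> 'a :: banach"
  assumes bound: "\<And>k n. norm (T k n) \<le> u k * v n"
    and u: "summable u" and v: "summable v"
    and rows: "\<And>k. (\<lambda>n. T k n) sums A k" and A: "A sums S"
    and cols: "\<And>n. (\<lambda>k. T k n) sums B n"
  shows "B sums S"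
proof -
  have row_norm: "summable (\<lambda>n. norm (T k n))" for k
    by (rule summable_comparison_test'[OF summable_mult[OF v, of "u k"]]) (simp add: bound)
  have col_norm: "summable (\<lambda>k. norm (T k n))" for n
    by (rule summable_comparison_test'[OF summable_mult2[OF u, of "v n"]]) (simp add: bound)
  have row_sum_le: "(\<Sum>n. norm (T k n)) \<le> u k * suminf v" for k
    using suminf_le[OF bound row_norm summable_mult[OF v]] by (simp add: suminf_mult[OF v])
  have col_sum_le: "(\<Sum>k. norm (T k n)) \<le> suminf u * v n" for n
    using suminf_le[OF bound col_norm summable_mult2[OF u]] by (simp add: suminf_mult2[OF u])
  have row_infsum: "infsum (\<lambda>n. T k n) UNIV = A k" for k
    by (intro infsumI norm_summable_imp_has_sum row_norm rows)
  have col_infsum: "infsum (\<lambda>k. T k n) UNIV = B n" for n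
    by (intro infsumI norm_summable_imp_has_sum col_norm cols)
  have "(\<lambda>(k, n). T k n) abs_summable_on UNIV \<times> UNIV"
  proof (subst Infinite_Sum.abs_summable_on_Sigma_iff, intro conjI ballI)
    show "(\<lambda>n. norm ((\<lambda>(k, n). T k n) (k, n))) summable_on UNIV" for k
      using row_norm[of k] by (auto intro: norm_summable_imp_summable_on)
    have "infsum (\<lambda>n. norm (T k n)) UNIV = (\<Sum>n. norm (T k n))" for k
      using row_norm[of k] by (intro infsumI norm_summable_imp_has_sum) (auto intro: summable_sums)
    moreover have "summable (\<lambda>k. norm (norm (\<Sum>n. norm (T k n))))"
      by (rule summable_comparison_test'[OF summable_mult2[OF u, of "suminf v"]])
         (use row_sum_le in \<open>simp add: suminf_nonneg row_norm\<close>)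
    ultimately show
      "(\<lambda>k. norm (infsum (\<lambda>n. norm ((\<lambda>(k, n). T k n) (k, n))) UNIV)) summable_on UNIV"
      by (auto intro: norm_summable_imp_summable_on)
  qed
  then have "infsum A UNIV = infsum B UNIV"
    using infsum_swap_banach[OF abs_summable_summable, of "\<lambda>k n. T k n" UNIV UNIV]
    by (simp add: row_infsum col_infsum)
  moreover have A_norm: "summable (\<lambda>k. norm (A k))"
  proof (rule summable_comparison_test'[OF summable_mult2[OF u, of "suminf v"]])
    show "norm (norm (A k)) \<le> u k * suminf v" for k
      using summable_norm[OF row_norm[of k]] row_sum_le[of k] rows[of k] by (simp add: sums_iff)
  qed
  moreover have B_norm: "summable (\<lambda>n. norm (B n))"
  proof (rule summable_comparison_test'[OF summable_mult[OF v, of "suminf u"]])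
    show "norm (norm (B n)) \<le> suminf u * v n" for n
      using summable_norm[OF col_norm[of n]] col_sum_le[of n] cols[of n] by (simp add: sums_iff)
  qed
  moreover have B_sums: "B sums suminf B"
    by (rule summable_sums[OF summable_norm_cancel[OF B_norm]])
  ultimately have "S = suminf B"
    using infsumI[OF norm_summable_imp_has_sum[OF A_norm A]]
          infsumI[OF norm_summable_imp_has_sum[OF B_norm B_sums]] by simp
  with B_sums show ?thesis by simp
qed

lemma hurwitz_zeta_series_binomial:
  assumes c: "c > 1" and s: "Re s > 1"
  shows "(\<lambda>n. pochhammer s n / fact n * hurwitz_zeta_series (s + of_nat n) c)
            sums hurwitz_zeta_series s (c - 1)"
proof -
  define T where "T k n = pochhammer s n / fact n * inverse (complex_of_real (real k + c) powr (s + of_nat n))"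
    for k n
  define v where "v n = pochhammer (norm s) n / fact n * (1 / c) ^ n" for n
  have v: "summable v"
    unfolding v_def using pochhammer_series_sums[of "1 / c" "norm s"] c by (auto intro: sums_summable)
  have bound: "norm (T k n) \<le> (real k + c) powr (- Re s) * v n" for k n
  proof -
    define x where "x = real k + c"
    have x: "x \<ge> c" "x > 0" using c by (auto simp: x_def)
    have "norm (inverse (complex_of_real x powr (s + of_nat n))) = x powr (- Re s) * inverse (x ^ n)"
      using x by (simp add: norm_inverse_of_real_powr powr_diff powr_realpow divide_inverse)
    also have "\<dots> \<le> x powr (- Re s) * (1 / c) ^ n"
    proof (intro mult_left_mono)
      have "c ^ n \<le> x ^ n" using x c by (intro power_mono) auto
      then have "inverse (x ^ n) \<le> inverse (c ^ n)" using c by (intro le_imp_inverse_le) auto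
      then show "inverse (x ^ n) \<le> (1 / c) ^ n" by (simp add: power_one_over inverse_eq_divide)
    qed simp
    finally have "norm (inverse (complex_of_real x powr (s + of_nat n))) \<le> x powr (- Re s) * (1 / c) ^ n" .
    moreover have "norm (pochhammer s n) / fact n \<le> pochhammer (norm s) n / fact n"
      by (intro divide_right_mono norm_pochhammer_le) auto
    moreover have "norm s > 0" using s complex_Re_le_cmod[of s] by linarith
    ultimately show ?thesis
      unfolding T_def v_def x_def norm_mult norm_divide norm_fact
      by (subst mult.left_commute) (intro mult_mono; simp add: pochhammer_nonneg)
  qed
  show ?thesis
  proof (rule sums_swap_of_product_bound[OF bound summable_shifted_powr[OF _ s] v])
    show "(\<lambda>n. T k n) sums inverse (complex_of_real (real k + c - 1) powr s)" for k
      unfolding T_def using c by (intro binomial_series_inverse_powr) auto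
    show "(\<lambda>k. inverse (complex_of_real (real k + c - 1) powr s)) sums hurwitz_zeta_series s (c - 1)"
      using hurwitz_zeta_series_sums[of "c - 1" s] c s by (simp add: algebra_simps)
    show "(\<lambda>k. T k n) sums (pochhammer s n / fact n * hurwitz_zeta_series (s + of_nat n) c)" for n
      unfolding T_def using c s by (intro sums_mult hurwitz_zeta_series_sums) auto
  qed (use c in simp)
qed

section \<open>Analytic continuation\<close>

definition pole_free_hurwitz_zeta :: "real \<Rightarrow> complex \<Rightarrow> complex" where
  "pole_free_hurwitz_zeta c w = (w - 1) * hurwitz_zeta_series w c"

text \<open>This is the binomial identity for s = w - 1 with its first two terms split off. Since F is
  only evaluated at w + i + 1, one application extends a holomorphic F from Re w > x to
  Re w > x - 1.\<close>
definition hurwitz_continuation_step ::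
    "real \<Rightarrow> (complex \<Rightarrow> complex) \<Rightarrow> complex \<Rightarrow> complex" where
  "hurwitz_continuation_step c F w = complex_of_real (c - 1) powr (1 - w) -
     (\<Sum>i. pochhammer (w - 1) (Suc i) / fact (i + 2) * F (w + of_nat i + 1))"

lemma hurwitz_continuation_step_fixed_point:
  assumes c: "c > 1" and w: "Re w > 2"
  shows "hurwitz_continuation_step c (pole_free_hurwitz_zeta c) w = pole_free_hurwitz_zeta c w"
proof -
  define s where "s = w - 1"
  have s: "Re s > 1" using w by (simp add: s_def)
  define t where "t n = pochhammer s n / fact n * hurwitz_zeta_series (s + of_nat n) c" for n
  define u where "u i = pochhammer s i / fact (Suc i) * pole_free_hurwitz_zeta c (w + of_nat i)" for i
  have "hurwitz_zeta_series s (c - 1) = inverse (complex_of_real (c - 1) powr s) + hurwitz_zeta_series s c"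
    using hurwitz_zeta_series_shift[of "c - 1" s] c s by simp
  then have "t sums (inverse (complex_of_real (c - 1) powr s) + t 0)"
    using hurwitz_zeta_series_binomial[OF c s] unfolding t_def by simp
  then have "(\<lambda>n. t (Suc n)) sums inverse (complex_of_real (c - 1) powr s)"
    by (subst sums_Suc_iff)
  moreover have "t (Suc i) = u i" for i
    by (simp add: t_def u_def pole_free_hurwitz_zeta_def s_def pochhammer_Suc field_simps)
  ultimately have "u sums inverse (complex_of_real (c - 1) powr s)" by simp
  then have "(\<lambda>i. u (Suc i)) sums (inverse (complex_of_real (c - 1) powr s) - pole_free_hurwitz_zeta c w)"
    by (subst sums_Suc_iff) (simp add: u_def)
  moreover have "u (Suc i) = pochhammer (w - 1) (Suc i) / fact (i + 2) *
                               pole_free_hurwitz_zeta c (w + of_nat i + 1)" for i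
    by (simp add: u_def s_def add_ac)
  moreover have "complex_of_real (c - 1) powr (1 - w) = inverse (complex_of_real (c - 1) powr s)"
    using powr_minus[of "complex_of_real (c - 1)" s] by (simp add: s_def)
  ultimately show ?thesis
    unfolding hurwitz_continuation_step_def by (simp add: sums_iff)
qed

lemma pochhammer_mono:
  fixes a b :: real
  assumes "0 \<le> a" "a \<le> b"
  shows "pochhammer a n \<le> pochhammer b n"
  unfolding pochhammer_prod using assms by (intro prod_mono) auto

lemma norm_continuation_term_le:
  assumes c: "c > 1" and w: "norm w \<le> R - 1" and i: "real i \<ge> R + 1"
  shows "norm (pochhammer (w - 1) (Suc i) / fact (i + 2) * pole_free_hurwitz_zeta c (w + of_nat i + 1))
           \<le> pochhammer R (i + 2) / fact (i + 2) * (1 / c) ^ (i + 2) *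
               ((\<Sum>k. (real k + c) powr (-2)) * c powr R * c ^ 2)"
proof -
  define K where "K = (\<Sum>k. (real k + c) powr (-2))"
  define v where "v = w + of_nat i + 1"
  have R: "R \<ge> 1" using w norm_ge_zero[of w] by linarith
  have K: "K \<ge> 0"
    unfolding K_def using summable_shifted_powr[of c 2] c by (intro suminf_nonneg) auto
  have re_w: "Re w \<ge> 1 - R" using abs_Re_le_cmod[of w] w by linarith
  have re_v: "Re v = Re w + real i + 1" by (simp add: v_def)
  have poch: "norm (pochhammer (w - 1) (Suc i)) \<le> pochhammer R (Suc i)"
  proof -
    have "norm (w - 1) \<le> R" using norm_triangle_ineq4[of w 1] w by simp
    then show ?thesis
      using norm_pochhammer_le[of "w - 1" "Suc i"] pochhammer_mono[of "norm (w - 1)" R "Suc i"] by simp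
  qed
  have factor: "norm (w + of_nat i) \<le> R + real (Suc i)"
    using norm_triangle_ineq[of w "of_nat i"] w by simp
  have zeta: "norm (hurwitz_zeta_series v c) \<le> K * (c powr R * (1 / c) ^ i)"
  proof -
    have "norm (hurwitz_zeta_series v c) \<le> K * c powr (2 - Re v)"
      unfolding K_def using norm_hurwitz_zeta_series_le[of c v] c re_v re_w i by simp
    also have "\<dots> \<le> K * c powr (R - real i)"
      using c re_v re_w K by (intro mult_left_mono powr_mono) auto
    also have "c powr (R - real i) = c powr R * (1 / c) ^ i"
      using c by (simp add: powr_diff powr_realpow power_one_over divide_inverse power_inverse)
    finally show ?thesis .
  qed
  have "norm (pochhammer (w - 1) (Suc i) / fact (i + 2) * pole_free_hurwitz_zeta c v)
        = norm (pochhammer (w - 1) (Suc i)) / fact (i + 2) * (norm (w + of_nat i) * norm (hurwitz_zeta_series v c))"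
    unfolding pole_free_hurwitz_zeta_def v_def norm_mult norm_divide norm_fact by simp
  also have "\<dots> \<le> pochhammer R (Suc i) / fact (i + 2) * ((R + real (Suc i)) * (K * (c powr R * (1 / c) ^ i)))"
    using poch factor zeta R K c pochhammer_nonneg[of R "Suc i"]
    by (intro mult_mono divide_right_mono) auto
  also have "\<dots> = pochhammer R (i + 2) / fact (i + 2) * (1 / c) ^ (i + 2) * (K * c powr R * c ^ 2)"
  proof -
    have "pochhammer R (i + 2) = pochhammer R (Suc i) * (R + real (Suc i))"
      by (simp add: pochhammer_Suc numeral_2_eq_2)
    moreover have "(1 / c) ^ i = (1 / c) ^ (i + 2) * c ^ 2"
      using c by (simp add: power_add power_one_over power2_eq_square)
    ultimately show ?thesis using c by (simp add: ac_simps power2_eq_square)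
  qed
  finally show ?thesis by (simp add: K_def v_def)
qed

lemma holomorphic_hurwitz_continuation_step:
  assumes c: "c > 1" and F: "F holomorphic_on {w. x < Re w}"
    and F_eq: "\<And>w. 2 < Re w \<Longrightarrow> F w = pole_free_hurwitz_zeta c w"
  shows "hurwitz_continuation_step c F holomorphic_on {w. x - 1 < Re w}"
proof (rule holomorphic_on_localI)
  fix z assume z: "z \<in> {w. x - 1 < Re w}"
  define r where "r = (Re z - (x - 1)) / 2"
  define R where "R = norm z + r + 1"
  define M where "M i = pochhammer R (i + 2) / fact (i + 2) * (1 / c) ^ (i + 2) *
                          ((\<Sum>k. (real k + c) powr (-2)) * c powr R * c ^ 2)" for i
  have r: "r > 0" using z by (simp add: r_def)
  have re: "x - 1 < Re w" and norm_w: "norm w \<le> R - 1" if "w \<in> cball z r" for w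
  proof -
    have "\<bar>Re z - Re w\<bar> \<le> r"
      using that abs_Re_le_cmod[of "z - w"] by (auto simp: dist_norm)
    then have "Re z - Re w \<le> r" by (rule abs_le_D1)
    then show "x - 1 < Re w" using z unfolding r_def by simp
    show "norm w \<le> R - 1"
      using that norm_triangle_ineq2[of w z] by (auto simp: R_def dist_norm norm_minus_commute)
  qed
  have "(\<lambda>w. \<Sum>i. pochhammer (w - 1) (Suc i) / fact (i + 2) * F (w + of_nat i + 1)) holomorphic_on ball z r"
  proof (rule holomorphic_on_ball_suminf[where M = M])
    fix i :: nat
    have "(\<lambda>w. w + of_nat i + 1) ` cball z r \<subseteq> {w. x < Re w}"
      using re by force
    then have "(F \<circ> (\<lambda>w. w + of_nat i + 1)) holomorphic_on cball z r"
      by (intro holomorphic_on_compose_gen[OF _ F] holomorphic_intros)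
    then show "(\<lambda>w. pochhammer (w - 1) (Suc i) / fact (i + 2) * F (w + of_nat i + 1)) holomorphic_on cball z r"
      by (intro holomorphic_intros) (auto simp: o_def)
  next
    show "eventually (\<lambda>i. \<forall>w\<in>cball z r.
            norm (pochhammer (w - 1) (Suc i) / fact (i + 2) * F (w + of_nat i + 1)) \<le> M i) sequentially"
      using eventually_ge_at_top[of "nat \<lceil>R\<rceil> + 1"]
    proof eventually_elim
      case (elim i)
      then have i: "real i \<ge> R + 1" by linarith
      show ?case
      proof
        fix w assume w: "w \<in> cball z r"
        have "2 < Re (w + of_nat i + 1)"
          using abs_Re_le_cmod[of w] norm_w[OF w] i by simp
        then show "norm (pochhammer (w - 1) (Suc i) / fact (i + 2) * F (w + of_nat i + 1)) \<le> M i"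
          unfolding M_def using norm_continuation_term_le[OF c norm_w[OF w] i] F_eq by simp
      qed
    qed
  next
    define p where "p i = pochhammer R i / fact i * (1 / c) ^ i" for i
    have "summable p"
      unfolding p_def using pochhammer_series_sums[of "1 / c" R] c by (auto intro: sums_summable)
    then have "summable (\<lambda>i. p (i + 2))" by (subst summable_iff_shift)
    then show "summable M" unfolding M_def p_def by (rule summable_mult2)
  qed
  then show "\<exists>r>0. hurwitz_continuation_step c F holomorphic_on ball z r"
    using r c unfolding hurwitz_continuation_step_def by (intro exI[of _ r] conjI holomorphic_intros) auto
qed

lemma holomorphic_eq_on_halfplane:
  assumes "f holomorphic_on {w. x < Re w}" "g holomorphic_on {w. x < Re w}"
    and "\<And>w. y < Re w \<Longrightarrow> f w = g w" "x < Re w"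
  shows "f w = g w"
proof (rule analytic_continuation_open[of "{w. max x y < Re w}" "{w. x < Re w}" f g])
  show "open {w. max x y < Re w}" by (rule open_halfspace_Re_gt)
  show "{w. max x y < Re w} \<noteq> {}" by (auto intro!: exI[of _ "of_real (max x y + 1)"])
  show "connected {w. x < Re w}" by (intro convex_connected convex_halfspace_Re_gt)
qed (use assms in \<open>auto simp: open_halfspace_Re_gt\<close>)

lemma hurwitz_continuation_step_cong:
  assumes "\<And>i. F (w + of_nat i + 1) = G (w + of_nat i + 1)"
  shows "hurwitz_continuation_step c F w = hurwitz_continuation_step c G w"
  using assms by (simp add: hurwitz_continuation_step_def)

lemma hurwitz_continuation_iterate_eq:
  assumes c: "c > 1" and w: "2 < Re w"
  shows "(hurwitz_continuation_step c ^^ m) (pole_free_hurwitz_zeta c) w = pole_free_hurwitz_zeta c w"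
  using w
proof (induction m arbitrary: w)
  case (Suc m)
  have "(hurwitz_continuation_step c ^^ Suc m) (pole_free_hurwitz_zeta c) w =
          hurwitz_continuation_step c ((hurwitz_continuation_step c ^^ m) (pole_free_hurwitz_zeta c)) w"
    by simp
  also have "\<dots> = hurwitz_continuation_step c (pole_free_hurwitz_zeta c) w"
    by (rule hurwitz_continuation_step_cong) (use Suc in simp)
  also have "\<dots> = pole_free_hurwitz_zeta c w"
    by (rule hurwitz_continuation_step_fixed_point[OF c Suc.prems])
  finally show ?case .
qed simp

lemma holomorphic_hurwitz_continuation_iterate:
  assumes c: "c > 1"
  shows "(hurwitz_continuation_step c ^^ m) (pole_free_hurwitz_zeta c) holomorphic_on {w. 1 - real m < Re w}"
proof (induction m)
  case 0
  have "(\<lambda>w. (w - 1) * hurwitz_zeta_series w c) holomorphic_on {w. 1 < Re w}"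
    using holomorphic_hurwitz_zeta_series[of c] c by (intro holomorphic_intros) auto
  then show ?case by (simp add: pole_free_hurwitz_zeta_def[abs_def])
next
  case (Suc m)
  then have "hurwitz_continuation_step c ((hurwitz_continuation_step c ^^ m) (pole_free_hurwitz_zeta c))
               holomorphic_on {w. 1 - real m - 1 < Re w}"
    using hurwitz_continuation_iterate_eq[OF c]
    by (intro holomorphic_hurwitz_continuation_step[OF c]) auto
  then show ?case by (simp add: algebra_simps)
qed

lemma pole_free_hurwitz_zeta_entire_extension:
  assumes c: "c > 1"
  obtains G where "G holomorphic_on UNIV" "G 1 = 1"
    "\<And>w. 1 < Re w \<Longrightarrow> G w = pole_free_hurwitz_zeta c w"
proof -
  define F where "F m = (hurwitz_continuation_step c ^^ m) (pole_free_hurwitz_zeta c)" for m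
  define H where "H m = {w. 1 - real m < Re w}" for m
  have F: "F m holomorphic_on H m" for m
    unfolding F_def H_def by (rule holomorphic_hurwitz_continuation_iterate[OF c])
  have F_1: "F (Suc m) 1 = 1" for m
    using c by (simp add: F_def hurwitz_continuation_step_def pochhammer_0_left)
  have F_agree: "F m w = F n w" if "w \<in> H m" "w \<in> H n" for m n w
  proof (rule holomorphic_eq_on_halfplane[where f = "F m" and g = "F n" and x = "1 - real (min m n)" and y = 2])
    show "F m holomorphic_on {w. 1 - real (min m n) < Re w}"
      by (rule holomorphic_on_subset[OF F[of m]]) (auto simp: H_def)
    show "F n holomorphic_on {w. 1 - real (min m n) < Re w}"
      by (rule holomorphic_on_subset[OF F[of n]]) (auto simp: H_def)
    show "F m v = F n v" if "2 < Re v" for v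
      unfolding F_def using hurwitz_continuation_iterate_eq[OF c that] by simp
    show "1 - real (min m n) < Re w" using that by (auto simp: H_def min_def)
  qed
  define level where "level w = nat \<lceil>- Re w\<rceil> + 2" for w
  have in_level: "w \<in> H (level w)" for w
  proof -
    have "real (nat \<lceil>- Re w\<rceil>) \<ge> - Re w" by linarith
    then show ?thesis by (simp add: H_def level_def)
  qed
  define G where "G w = F (level w) w" for w
  have "G holomorphic_on UNIV"
  proof (rule holomorphic_on_localI)
    fix z :: complex
    obtain e where e: "e > 0" "ball z e \<subseteq> H (level z)"
      using open_halfspace_Re_gt in_level[of z] unfolding H_def by (meson open_contains_ball)
    have "F (level z) holomorphic_on ball z e"
      using holomorphic_on_subset[OF F[of "level z"] e(2)] .
    then have "G holomorphic_on ball z e"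
    proof (rule holomorphic_transform)
      fix v assume "v \<in> ball z e"
      then show "F (level z) v = G v"
        unfolding G_def using F_agree[of v "level z" "level v"] e(2) in_level[of v] by blast
    qed
    with e(1) show "\<exists>e>0. G holomorphic_on ball z e" by blast
  qed
  moreover have "G w = pole_free_hurwitz_zeta c w" if "1 < Re w" for w
  proof -
    have "G w = F 0 w"
      unfolding G_def using F_agree[of w "level w" 0] in_level[of w] that by (simp add: H_def)
    then show ?thesis by (simp add: F_def)
  qed
  moreover have "G 1 = 1" using F_1 by (simp add: G_def level_def)
  ultimately show ?thesis using that by blast
qed

lemma hurwitz_zeta_regular_part_exists:
  assumes a: "a > 0"
  shows "\<exists>g. g holomorphic_on UNIV \<and>
               (\<forall>s. 1 < Re s \<longrightarrow> g s = hurwitz_zeta_series s a - 1 / (s - 1))"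
proof -
  obtain G where G: "G holomorphic_on UNIV" "G 1 = 1"
    "\<And>w. 1 < Re w \<Longrightarrow> G w = pole_free_hurwitz_zeta (a + 1) w"
    using pole_free_hurwitz_zeta_entire_extension[of "a + 1"] a by auto
  define g where "g w = inverse (complex_of_real a powr w) +
                   (if w = 1 then deriv G 1 else (G w - G 1) / (w - 1))" for w
  have "g holomorphic_on UNIV"
    unfolding g_def[abs_def]
    by (intro holomorphic_intros holomorphic_on_inverse_of_real_powr a pole_lemma_open G(1)) simp
  moreover have "g s = hurwitz_zeta_series s a - 1 / (s - 1)" if s: "1 < Re s" for s
  proof -
    have "s \<noteq> 1" using s by auto
    then have "(G s - G 1) / (s - 1) = hurwitz_zeta_series s (a + 1) - 1 / (s - 1)"
      using G(3)[OF s] G(2) by (simp add: pole_free_hurwitz_zeta_def field_simps)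
    then show ?thesis
      using \<open>s \<noteq> 1\<close> hurwitz_zeta_series_shift[OF a s] by (simp add: g_def)
  qed
  ultimately show ?thesis by blast
qed

lemma
  assumes "a > 0"
  shows holomorphic_hurwitz_zeta_regular: "hurwitz_zeta_regular a holomorphic_on UNIV"
    and hurwitz_zeta_regular_eq:
      "1 < Re s \<Longrightarrow> hurwitz_zeta_regular a s = hurwitz_zeta_series s a - 1 / (s - 1)"
proof -
  define P where "P g \<longleftrightarrow> g holomorphic_on UNIV \<and>
                   (\<forall>s. 1 < Re s \<longrightarrow> g s = hurwitz_zeta_series s a - 1 / (s - 1))" for g
  have "\<exists>!g. P g"
  proof (rule ex_ex1I)
    show "\<exists>g. P g" unfolding P_def using hurwitz_zeta_regular_part_exists[OF assms] .
    fix g h assume g: "P g" and h: "P h"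
    show "g = h"
    proof
      fix w
      show "g w = h w"
        by (rule holomorphic_eq_on_halfplane[where x = "Re w - 1" and y = 1])
           (use g h in \<open>auto simp: P_def intro: holomorphic_on_subset\<close>)
    qed
  qed
  then have "P (hurwitz_zeta_regular a)"
    unfolding hurwitz_zeta_regular_def P_def[symmetric] by (rule theI')
  then show "hurwitz_zeta_regular a holomorphic_on UNIV"
    and "1 < Re s \<Longrightarrow> hurwitz_zeta_regular a s = hurwitz_zeta_series s a - 1 / (s - 1)"
    by (auto simp: P_def)
qed

section \<open>The Stieltjes series at \<open>s = 4\<close>\<close>

lemma stieltjes_series_sums:
  assumes "a > 0" "1 < Re s"
  shows "(\<lambda>n. (-1) ^ n / fact n * (s - 1) ^ n * stieltjes n a) sums (hurwitz_zeta_series s a - 1 / (s - 1))"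
proof -
  have "hurwitz_zeta_regular a holomorphic_on ball 1 (norm (s - 1) + 1)"
    using holomorphic_hurwitz_zeta_regular[OF assms(1)] by (rule holomorphic_on_subset) simp
  from holomorphic_power_series[OF this, of s]
  have "(\<lambda>n. (deriv ^^ n) (hurwitz_zeta_regular a) 1 / fact n * (s - 1) ^ n) sums hurwitz_zeta_regular a s"
    by (simp add: dist_norm norm_minus_commute)
  moreover have "(-1) ^ n / fact n * (s - 1) ^ n * stieltjes n a =
                   (deriv ^^ n) (hurwitz_zeta_regular a) 1 / fact n * (s - 1) ^ n" for n
    by (simp add: stieltjes_def flip: power_mult_distrib)
  ultimately show ?thesis
    unfolding hurwitz_zeta_regular_eq[OF assms] by (simp only:)
qed

lemma hurwitz_zeta_series_of_nat_eq_Polygamma: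
  assumes "a > 0" "m > 0"
  shows "hurwitz_zeta_series (of_nat (Suc m)) a = (-1) ^ Suc m * complex_of_real (Polygamma m a) / fact m"
proof -
  have "inverse (complex_of_real (real k + a) powr of_nat (Suc m)) = inverse ((of_real a + of_nat k) ^ Suc m)" for k
    using assms by (subst powr_nat') (auto simp: add.commute add_nonneg_pos)
  then have "(\<lambda>k. inverse ((complex_of_real a + of_nat k) ^ Suc m)) sums hurwitz_zeta_series (of_nat (Suc m)) a"
    using hurwitz_zeta_series_sums[of a "of_nat (Suc m)"] assms by simp
  moreover have "(\<lambda>k. inverse ((complex_of_real a + of_nat k) ^ Suc m)) sums
                   ((-1) ^ Suc m * Polygamma m (complex_of_real a) / fact m)"
    using assms by (intro Polygamma_LIMSEQ) auto
  ultimately show ?thesis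
    using assms by (simp add: sums_unique2 Polygamma_of_real)
qed

lemma stieltjes_series_at_4:
  assumes "a > 0"
  shows "(\<lambda>n. (-1) ^ n / fact n * 3 ^ n * stieltjes n a) sums (of_real (Polygamma 3 a) / 6 - 1/3)"
proof -
  have zeta_4: "hurwitz_zeta_series 4 a = of_real (Polygamma 3 a) / 6"
    using hurwitz_zeta_series_of_nat_eq_Polygamma[of a 3] assms by (simp add: fact_numeral)
  show ?thesis using stieltjes_series_sums[of a 4] assms by (simp add: zeta_4)
qed

section \<open>Reflection formula for the third derivative of the digamma function\<close>

abbreviation PI :: complex where "PI \<equiv> complex_of_real pi"

lemma higher_deriv_3_eqI:
  assumes S: "open S" "z \<in> S"
   and d1: "\<And>x. x \<in> S \<Longrightarrow> (f has_field_derivative f1 x) (at x)"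
   and d2: "\<And>x. x \<in> S \<Longrightarrow> (f1 has_field_derivative f2 x) (at x)"
   and d3: "\<And>x. x \<in> S \<Longrightarrow> (f2 has_field_derivative f3 x) (at x)"
  shows "(deriv ^^ 3) f z = (f3 z :: complex)"
proof -
  have e1: "deriv f x = f1 x" if "x \<in> S" for x using DERIV_imp_deriv[OF d1[OF that]] .
  have e2: "deriv (deriv f) x = f2 x" if x: "x \<in> S" for x
  proof -
    have "(deriv f has_field_derivative f2 x) (at x)"
      by (rule has_field_derivative_transform_within_open[OF d2[OF x] S(1) x]) (use e1 in auto)
    then show ?thesis by (rule DERIV_imp_deriv)
  qed
  have "(deriv (deriv f) has_field_derivative f3 z) (at z)"
    by (rule has_field_derivative_transform_within_open[OF d3[OF S(2)] S(1) S(2)]) (use e2 in auto)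
  then have "deriv (deriv (deriv f)) z = f3 z" by (rule DERIV_imp_deriv)
  then show ?thesis by (simp add: numeral_3_eq_3)
qed

definition unit_strip :: "complex set" where
  "unit_strip = {z. 0 < Re z \<and> Re z < 1}"

lemma open_unit_strip: "open unit_strip"
  unfolding unit_strip_def Collect_conj_eq by (intro open_Int open_halfspace_Re_gt open_halfspace_Re_lt)

lemma one_minus_in_unit_strip: "z \<in> unit_strip \<Longrightarrow> 1 - z \<in> unit_strip"
  by (simp add: unit_strip_def)

lemma unit_strip_not_nonpos_Ints: "z \<in> unit_strip \<Longrightarrow> z \<notin> \<int>\<^sub>\<le>\<^sub>0"
  by (auto simp: unit_strip_def elim!: nonpos_Ints_cases)

lemma sin_pi_unit_strip_neq_0:
  assumes "z \<in> unit_strip"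
  shows "sin (PI * z) \<noteq> 0"
proof
  assume "sin (PI * z) = 0"
  then obtain n :: int where "PI * z = of_real (of_int n * pi)" by (auto simp: sin_eq_0)
  then have "z = of_int n" by (simp add: mult.commute)
  with assms show False by (auto simp: unit_strip_def)
qed

lemma Digamma_reflection_unit_strip:
  assumes x: "x \<in> unit_strip"
  shows "Digamma x - Digamma (1 - x) = - PI * cos (PI * x) / sin (PI * x)"
proof -
  have nx: "x \<notin> \<int>\<^sub>\<le>\<^sub>0" and nx1: "1 - x \<notin> \<int>\<^sub>\<le>\<^sub>0"
    using unit_strip_not_nonpos_Ints x one_minus_in_unit_strip[OF x] by auto
  have reflection: "Gamma y * Gamma (1 - y) * sin (PI * y) = PI" if "y \<in> unit_strip" for y
    using Gamma_reflection_complex[of y] sin_pi_unit_strip_neq_0[OF that] by simp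
  have d_Gamma: "(Gamma has_field_derivative Gamma x * Digamma x) (at x)"
    by (rule has_field_derivative_Gamma[OF nx])
  have d_Gamma_reflected:
    "((\<lambda>z. Gamma (1 - z)) has_field_derivative (Gamma (1 - x) * Digamma (1 - x)) * (-1)) (at x)"
  proof (rule DERIV_chain2[where f = Gamma and g = "\<lambda>z. 1 - z", OF has_field_derivative_Gamma[OF nx1]])
    show "((\<lambda>z. 1 - z) has_field_derivative -1) (at x)" by (auto intro!: derivative_eq_intros)
  qed
  have d_sin: "((\<lambda>z. sin (PI * z)) has_field_derivative PI * cos (PI * x)) (at x)"
    by (auto intro!: derivative_eq_intros)
  have "((\<lambda>z. Gamma z * Gamma (1 - z) * sin (PI * z)) has_field_derivative
      ((Gamma x * Digamma x) * Gamma (1 - x) + ((Gamma (1 - x) * Digamma (1 - x)) * (-1)) * Gamma x) * sin (PI * x)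
        + (PI * cos (PI * x)) * (Gamma x * Gamma (1 - x))) (at x)"
    using DERIV_mult[OF DERIV_mult[OF d_Gamma d_Gamma_reflected] d_sin] by simp
  moreover have "((\<lambda>z. Gamma z * Gamma (1 - z) * sin (PI * z)) has_field_derivative 0) (at x)"
    by (rule has_field_derivative_transform_within_open[OF DERIV_const[of PI] open_unit_strip x])
       (simp add: reflection)
  ultimately have "((Gamma x * Digamma x) * Gamma (1 - x) + ((Gamma (1 - x) * Digamma (1 - x)) * (-1)) * Gamma x)
        * sin (PI * x) + (PI * cos (PI * x)) * (Gamma x * Gamma (1 - x)) = 0"
    by (rule DERIV_unique)
  then have "Gamma x * Gamma (1 - x) * ((Digamma x - Digamma (1 - x)) * sin (PI * x) + PI * cos (PI * x)) = 0"
    by (simp add: algebra_simps)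
  moreover have "Gamma x \<noteq> 0" "Gamma (1 - x) \<noteq> 0" using nx nx1 by (auto simp: Gamma_eq_zero_iff)
  ultimately have "(Digamma x - Digamma (1 - x)) * sin (PI * x) + PI * cos (PI * x) = 0" by simp
  with sin_pi_unit_strip_neq_0[OF x] show ?thesis by (simp add: field_simps)
qed

lemma has_field_derivative_Polygamma_reflection:
  fixes x :: complex
  assumes nx: "x \<notin> \<int>\<^sub>\<le>\<^sub>0" and nx1: "1 - x \<notin> \<int>\<^sub>\<le>\<^sub>0"
  shows "((\<lambda>z. Polygamma n z - (-1)^n * Polygamma n (1 - z)) has_field_derivative
           (Polygamma (Suc n) x - (-1)^(Suc n) * Polygamma (Suc n) (1 - x))) (at x)"
proof -
  have "((\<lambda>z. Polygamma n (1 - z)) has_field_derivative Polygamma (Suc n) (1 - x) * (-1)) (at x)"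
  proof (rule DERIV_chain2[where f = "Polygamma n" and g = "\<lambda>z. 1 - z",
                           OF has_field_derivative_Polygamma[OF nx1]])
    show "((\<lambda>z. 1 - z) has_field_derivative -1) (at x)" by (auto intro!: derivative_eq_intros)
  qed
  from DERIV_diff[OF has_field_derivative_Polygamma[OF nx] DERIV_cmult[OF this, of "(-1)^n"]]
  show ?thesis by (rule DERIV_cong) simp
qed

lemma has_field_derivative_pi_cot_iterates:
  fixes x :: complex
  assumes sx: "sin (PI * x) \<noteq> 0"
  shows "((\<lambda>z. - PI * cos (PI * z) / sin (PI * z)) has_field_derivative PI^2 / sin (PI * x)^2) (at x)"
    and "((\<lambda>z. PI^2 / sin (PI * z)^2) has_field_derivative -2 * PI^3 * cos (PI * x) / sin (PI * x)^3) (at x)"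
    and "((\<lambda>z. -2 * PI^3 * cos (PI * z) / sin (PI * z)^3) has_field_derivative
            2 * PI^4 * (sin (PI * x)^2 + 3 * cos (PI * x)^2) / sin (PI * x)^4) (at x)"
proof -
  have ds: "((\<lambda>z. sin (PI * z)) has_field_derivative PI * cos (PI * x)) (at x)"
    by (auto intro!: derivative_eq_intros)
  have dc: "((\<lambda>z. cos (PI * z)) has_field_derivative -(PI * sin (PI * x))) (at x)"
    by (auto intro!: derivative_eq_intros)
  define S where "S = sin (PI * x)"
  define C where "C = cos (PI * x)"
  have S0: "S \<noteq> 0" using sx by (simp add: S_def)
  have SC: "S^2 + C^2 = 1" by (simp add: S_def C_def)
  show "((\<lambda>z. - PI * cos (PI * z) / sin (PI * z)) has_field_derivative PI^2 / sin (PI * x)^2) (at x)"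
  proof (rule DERIV_cong[OF DERIV_divide[OF DERIV_cmult[OF dc, of "-PI"] ds sx]])
    have "(- PI * - (PI * S) * S - - PI * C * (PI * C)) = PI^2 * (S^2 + C^2)"
      by (simp add: power2_eq_square algebra_simps)
    then show "(- PI * - (PI * sin (PI * x)) * sin (PI * x) - - PI * cos (PI * x) * (PI * cos (PI * x))) /
        (sin (PI * x) * sin (PI * x)) = PI\<^sup>2 / (sin (PI * x))\<^sup>2"
      unfolding S_def[symmetric] C_def[symmetric] SC by (simp add: power2_eq_square)
  qed
  have nz2: "sin (PI * x)^2 \<noteq> 0" using sx by simp
  show "((\<lambda>z. PI^2 / sin (PI * z)^2) has_field_derivative -2 * PI^3 * cos (PI * x) / sin (PI * x)^3) (at x)"
  proof (rule DERIV_cong[OF DERIV_divide[OF DERIV_const DERIV_power[OF ds] nz2]])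
    show "(0 * sin (PI * x)^2 - PI^2 * (of_nat 2 * (PI * cos (PI * x) * sin (PI * x) ^ (2 - Suc 0)))) /
          (sin (PI * x)^2 * sin (PI * x)^2) = -2 * PI^3 * cos (PI * x) / sin (PI * x)^3"
      unfolding S_def[symmetric] C_def[symmetric] using S0 by (simp add: field_simps eval_nat_numeral)
  qed
  have nz3: "sin (PI * x)^3 \<noteq> 0" using sx by simp
  show "((\<lambda>z. -2 * PI^3 * cos (PI * z) / sin (PI * z)^3) has_field_derivative
            2 * PI^4 * (sin (PI * x)^2 + 3 * cos (PI * x)^2) / sin (PI * x)^4) (at x)"
  proof (rule DERIV_cong[OF DERIV_divide[OF DERIV_cmult[OF dc, of "-2 * PI^3"] DERIV_power[OF ds, of 3] nz3]])
    show "(-2 * PI^3 * - (PI * sin (PI * x)) * sin (PI * x)^3 - -2 * PI^3 * cos (PI * x) *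
            (of_nat 3 * (PI * cos (PI * x) * sin (PI * x) ^ (3 - Suc 0)))) /
          (sin (PI * x)^3 * sin (PI * x)^3) = 2 * PI^4 * (sin (PI * x)^2 + 3 * cos (PI * x)^2) / sin (PI * x)^4"
      unfolding S_def[symmetric] C_def[symmetric] using S0 by (simp add: field_simps eval_nat_numeral)
  qed
qed

lemma Polygamma_3_reflection:
  assumes z: "z \<in> unit_strip"
  shows "Polygamma 3 z + Polygamma 3 (1 - z) =
           2 * PI^4 * (sin (PI * z)^2 + 3 * cos (PI * z)^2) / sin (PI * z)^4"
proof -
  define g where "g n w = Polygamma n w - (-1)^n * Polygamma n (1 - w)" for n and w :: complex
  have g_deriv: "(g n has_field_derivative g (Suc n) x) (at x)" if "x \<in> unit_strip" for n x
    using has_field_derivative_Polygamma_reflection[OF unit_strip_not_nonpos_Ints[OF that]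
            unit_strip_not_nonpos_Ints[OF one_minus_in_unit_strip[OF that]]]
    unfolding g_def[abs_def] by simp
  have "(deriv ^^ 3) (g 0) z = g 3 z"
    by (rule higher_deriv_3_eqI[OF open_unit_strip z]) (use g_deriv in \<open>simp_all add: numeral_3_eq_3\<close>)
  moreover have "(deriv ^^ 3) (g 0) z = 2 * PI^4 * (sin (PI * z)^2 + 3 * cos (PI * z)^2) / sin (PI * z)^4"
  proof (rule higher_deriv_3_eqI[OF open_unit_strip z])
    fix x assume x: "x \<in> unit_strip"
    note iterates = has_field_derivative_pi_cot_iterates[OF sin_pi_unit_strip_neq_0[OF x]]
    show "(g 0 has_field_derivative PI^2 / sin (PI * x)^2) (at x)"
      by (rule has_field_derivative_transform_within_open[OF iterates(1) open_unit_strip x])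
         (simp add: g_def Digamma_reflection_unit_strip)
    show "((\<lambda>x. PI^2 / sin (PI * x)^2) has_field_derivative -2 * PI^3 * cos (PI * x) / sin (PI * x)^3) (at x)"
      by (rule iterates(2))
    show "((\<lambda>x. -2 * PI^3 * cos (PI * x) / sin (PI * x)^3) has_field_derivative
            2 * PI^4 * (sin (PI * x)^2 + 3 * cos (PI * x)^2) / sin (PI * x)^4) (at x)"
      by (rule iterates(3))
  qed
  ultimately show ?thesis by (simp add: g_def)
qed

lemma Polygamma_3_quarter_sum: "Polygamma 3 (1/4 :: real) + Polygamma 3 (3/4) = 16 * pi^4"
proof -
  have "PI / 4 = of_real (pi / 4)" by simp
  then have sin: "sin (PI / 4) = of_real (sqrt 2 / 2)" and cos: "cos (PI / 4) = of_real (sqrt 2 / 2)"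
    by (simp_all only: sin_of_real cos_of_real sin_45 cos_45)
  have sq: "(sqrt 2 / 2 :: real)^2 = 1/2" by (simp add: power_divide)
  have sin2: "sin (PI / 4) ^ 2 = 1/2" unfolding sin of_real_power[symmetric] sq by simp
  have cos2: "cos (PI / 4) ^ 2 = 1/2" unfolding cos of_real_power[symmetric] sq by simp
  have "sin (PI / 4) ^ 4 = (sin (PI / 4) ^ 2) ^ 2" by (simp flip: power_mult)
  also have "\<dots> = 1/4" unfolding sin2 by (simp add: power2_eq_square)
  finally have sin4: "sin (PI / 4) ^ 4 = 1/4" .
  have "Polygamma 3 (1/4 :: complex) + Polygamma 3 (3/4) = 16 * PI^4"
    using Polygamma_3_reflection[of "1/4"] by (simp add: unit_strip_def sin2 cos2 sin4)
  then have "complex_of_real (Polygamma 3 (1/4) + Polygamma 3 (3/4)) = complex_of_real (16 * pi^4)"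
    using Polygamma_of_real[of "1/4" 3, where 'a = complex] Polygamma_of_real[of "3/4" 3, where 'a = complex]
    by simp
  then show ?thesis by (simp only: of_real_eq_iff)
qed

theorem proposition5:
  shows "(\<lambda>n. inverse (4 ^ 4) * ((-1) ^ n / fact n * 3 ^ n *
            (stieltjes n (1/4) - stieltjes n (3/4))))
         sums (complex_of_real (Polygamma 3 (1/4 :: real) / 768 - pi ^ 4 / 96))"
proof -
  have "(\<lambda>n. (-1) ^ n / fact n * 3 ^ n * (stieltjes n (1/4) - stieltjes n (3/4)))
          sums (of_real (Polygamma 3 (1/4)) / 6 - of_real (Polygamma 3 (3/4)) / 6)"
    using sums_diff[OF stieltjes_series_at_4 stieltjes_series_at_4, of "1/4" "3/4"]
    by (simp add: right_diff_distrib)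
  then have "(\<lambda>n. inverse (4 ^ 4) * ((-1) ^ n / fact n * 3 ^ n * (stieltjes n (1/4) - stieltjes n (3/4))))
          sums (inverse (4 ^ 4) * (of_real (Polygamma 3 (1/4)) / 6 - of_real (Polygamma 3 (3/4)) / 6))"
    by (rule sums_mult)
  moreover have "inverse (4 ^ 4) * (of_real (Polygamma 3 (1/4)) / 6 - of_real (Polygamma 3 (3/4)) / 6)
                   = complex_of_real (Polygamma 3 (1/4 :: real) / 768 - pi ^ 4 / 96)"
  proof -
    have three_quarters: "Polygamma 3 (3/4 :: real) = 16 * pi ^ 4 - Polygamma 3 (1/4)"
      using Polygamma_3_quarter_sum by (simp add: eq_diff_eq)
    have "inverse (4 ^ 4) * (of_real (Polygamma 3 (1/4)) / 6 - of_real (Polygamma 3 (3/4)) / 6)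
            = complex_of_real ((Polygamma 3 (1/4) - Polygamma 3 (3/4)) / 1536)"
      by simp
    also have "(Polygamma 3 (1/4) - Polygamma 3 (3/4)) / 1536 = Polygamma 3 (1/4 :: real) / 768 - pi ^ 4 / 96"
      unfolding three_quarters by (simp add: field_simps)
    finally show ?thesis .
  qed
  ultimately show ?thesis by (simp only:)
qed

end
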